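(* Let $\llbracket\mu\rrbracket$ be a FastPai encryption of $\mu\in\mathbb{Z}_N$ (e.g. the output of the secure comparison protocol), and let $\langle 2\alpha\rangle_0,\langle 2\alpha\rangle_1$ be integers held by $S_0$, $S_1$ respectively with $\langle 2\alpha\rangle_1-\langle 2\alpha\rangle_0=2\alpha$. Run protocol $\mathtt{C2S}$: $S_0$ sends $\llbracket\mu\rrbracket$ to $S_1$, and for $i\in\{0,1\}$, $S_i$ computes $\langle 2\alpha\mu\rangle_i=\mathrm{DDLog}_N(\llbracket\mu\rrbracket^{\langle 2\alpha\rangle_i}\bmod N^2)$. Then $\langle 2\alpha\mu\rangle_1-\langle 2\alpha\mu\rangle_0\equiv 2\alpha\cdot\mu\pmod N$.
   Context: FastPai: for a security parameter $\kappa$, $l(\kappa)=4\kappa$. $N=PQ$ with $P,Q$ primes of $n(\kappa)/2$ bits, $p,q$ odd primes of $l(\kappa)/2$ bits, $p\mid P-1$, $q\mid Q-1$, $P\equiv Q\equiv3\pmod4$, $\gcd(P-1,Q-1)=2$, $\gcd(pq,(P-1)(Q-1)/(4pq))=1$. Private key $\alpha=pq$; $\beta=(P-1)(Q-1)/(4pq)$; $h=-y_0^{2\beta}\bmod N$ for random $y_0\in\mathbb{Z}_N^*$; public key $(N,h)$. $\mathrm{Enc}(m)=(1+N)^m(h^r\bmod N)^N\bmod N^2$, $r$ uniform in $\{0,1\}^{l(\kappa)}$, written $\llbracket m\rrbracket$. Ciphertext exponentiations by (possibly negative) integers are in $\mathbb{Z}_{N^2}^*$. $\mathrm{DDLog}_N(g)=\lfloor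 g/N\rfloor\cdot(g\bmod N)^{-1}\bmod N$ for $g\in[0,N^2)$ with $g\bmod N$ invertible mod $N$. *)

theory Defs
  imports "HOL-Number_Theory.Number_Theory"
begin

definition has_bits :: "nat \<Rightarrow> int \<Rightarrow> bool" where
  "has_bits k x \<longleftrightarrow> 2 ^ (k - 1) \<le> x \<and> x < 2 ^ k"

definition lpar :: "nat \<Rightarrow> nat" where
  "lpar \<kappa> = 4 * \<kappa>"

definition fastpai_primes :: "nat \<Rightarrow> nat \<Rightarrow> int \<Rightarrow> int \<Rightarrow> int \<Rightarrow> int \<Rightarrow> bool" where
  "fastpai_primes \<kappa> n P Q p q \<longleftrightarrow>
     prime P \<and> prime Q \<and> has_bits (n div 2) P \<and> has_bits (n div 2) Q \<and>
     prime p \<and> prime q \<and> odd p \<and> odd q \<and>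
     has_bits (lpar \<kappa> div 2) p \<and> has_bits (lpar \<kappa> div 2) q \<and>
     p dvd P - 1 \<and> q dvd Q - 1 \<and>
     [P = 3] (mod 4) \<and> [Q = 3] (mod 4) \<and>
     gcd (P - 1) (Q - 1) = 2 \<and>
     gcd (p * q) ((P - 1) * (Q - 1) div (4 * p * q)) = 1"

definition fastpai_alpha :: "int \<Rightarrow> int \<Rightarrow> int" where
  "fastpai_alpha p q = p * q"

definition fastpai_beta :: "int \<Rightarrow> int \<Rightarrow> int \<Rightarrow> int \<Rightarrow> int" where
  "fastpai_beta P Q p q = (P - 1) * (Q - 1) div (4 * p * q)"

definition fastpai_h :: "int \<Rightarrow> int \<Rightarrow> int \<Rightarrow> int" where
  "fastpai_h N \<beta> y0 = (- (y0 ^ nat (2 * \<beta>))) mod N"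

definition fastpai_enc :: "int \<Rightarrow> int \<Rightarrow> int \<Rightarrow> nat \<Rightarrow> int" where
  "fastpai_enc N h m r = ((1 + N) ^ nat m * ((h ^ r) mod N) ^ nat N) mod (N ^ 2)"

definition zpow :: "int \<Rightarrow> int \<Rightarrow> int \<Rightarrow> int" where
  "zpow M c e = (if 0 \<le> e then c ^ nat e mod M
                 else (modular_inverse M c) ^ nat (- e) mod M)"

definition DDLog :: "int \<Rightarrow> int \<Rightarrow> int" where
  "DDLog N g = ((g div N) * modular_inverse N (g mod N)) mod N"

end

theory Submission
  imports Defs
begin

(*
  Since 4 alpha beta = (P - 1)(Q - 1) = phi(N), the public key satisfies h^(2 alpha) = 1 (mod N).
  Raising the randomness factor (h^r mod N)^N to the power 2 alpha therefore gives an element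
  that is 1 mod N raised to the N-th power, i.e. 1 mod N^2, so a ciphertext of mu satisfies
  c^(2 alpha) = (1 + N)^(2 alpha mu) = 1 + 2 alpha mu N (mod N^2).  The two exponentiations
  by the shares thus differ by the factor 1 + 2 alpha mu N, and DDLog turns a factor 1 + k N
  into the additive shift k modulo N.
*)

lemma cong_power_one_plus_linear:
  fixes x M :: int
  assumes "[x = 1] (mod M)"
  shows "[x ^ k = 1 + int k * (x - 1)] (mod M\<^sup>2)"
proof (induction k)
  case 0
  show ?case by simp
next
  case (Suc k)
  have "M\<^sup>2 dvd (x - 1)\<^sup>2"
    using assms by (simp add: cong_iff_dvd_diff dvd_power_same cong_sym_eq)
  then have "[int k * (x - 1)\<^sup>2 = 0] (mod M\<^sup>2)"
    by (simp add: cong_0_iff)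
  then have "[x * (1 + int k * (x - 1)) = 1 + int (Suc k) * (x - 1)] (mod M\<^sup>2)"
    by (simp add: cong_iff_dvd_diff algebra_simps power2_eq_square)
  with Suc.IH show ?case
    by (metis cong_scalar_left cong_trans power_Suc)
qed

lemma cong_power_modulus_square:
  fixes x M :: int
  assumes "[x = 1] (mod M)"
  shows "[x ^ nat M = 1] (mod M\<^sup>2)"
proof (cases "M \<ge> 0")
  case True
  have "M\<^sup>2 dvd M * (x - 1)"
    using assms by (simp add: power2_eq_square cong_iff_dvd_diff cong_sym_eq)
  then have "[1 + M * (x - 1) = 1] (mod M\<^sup>2)"
    by (simp add: cong_iff_dvd_diff)
  then show ?thesis
    using cong_power_one_plus_linear[OF assms, of "nat M"] True by (simp add: cong_trans)
qed simp

lemma one_plus_modulus_power: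
  fixes N :: int
  shows "[(1 + N) ^ k = 1 + int k * N] (mod N\<^sup>2)"
  using cong_power_one_plus_linear[of "1 + N" N k] by (simp add: cong_iff_dvd_diff)

lemma totient_mult_primes_int:
  fixes P Q :: int
  assumes "prime P" "prime Q" "P \<noteq> Q"
  shows "int (totient (nat (P * Q))) = (P - 1) * (Q - 1)"
proof -
  have "P > 1" "Q > 1"
    using assms prime_gt_1_int by blast+
  then have "prime (nat P)" "prime (nat Q)" "nat P \<noteq> nat Q"
    using assms by (simp_all add: prime_nat_iff_prime)
  then have "totient (nat P * nat Q) = totient (nat P) * totient (nat Q)"
    by (simp add: totient_mult_coprime primes_coprime)
  with \<open>prime (nat P)\<close> \<open>prime (nat Q)\<close> \<open>P > 1\<close> \<open>Q > 1\<close> show ?thesis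
    by (simp add: nat_mult_distrib totient_prime of_nat_diff)
qed

lemma zpow_plus_one:
  fixes M c e :: int
  assumes "coprime c M"
  shows "[zpow M c (e + 1) = zpow M c e * c] (mod M)"
proof (cases "e \<ge> 0")
  case True
  then have "nat (e + 1) = Suc (nat e)" by simp
  with True show ?thesis
    by (simp add: zpow_def cong_def mod_mult_left_eq mod_mult_right_eq mult.commute)
next
  case False
  define i where "i = modular_inverse M c"
  define n where "n = nat (- e - 1)"
  have "[i * c = 1] (mod M)"
    unfolding i_def using cong_modular_inverse2[OF assms] .
  then have "[i ^ n = i ^ Suc n * c] (mod M)"
    by (metis cong_scalar_left cong_sym mult.assoc mult.right_neutral power_Suc2)
  moreover have "zpow M c (e + 1) = i ^ n mod M" and "zpow M c e = i ^ Suc n mod M"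
    using False by (auto simp: zpow_def i_def n_def Suc_nat_eq_nat_zadd1)
  ultimately show ?thesis
    by (simp add: cong_def mod_mult_left_eq)
qed

lemma zpow_plus_of_nat:
  fixes M c e :: int
  assumes "coprime c M"
  shows "[zpow M c (e + int j) = zpow M c e * c ^ j] (mod M)"
proof (induction j)
  case 0
  show ?case by (simp add: zpow_def cong_def)
next
  case (Suc j)
  have "[zpow M c (e + int (Suc j)) = zpow M c (e + int j) * c] (mod M)"
    using zpow_plus_one[OF assms, of "e + int j"] by (simp add: ac_simps)
  also have "[zpow M c (e + int j) * c = zpow M c e * c ^ Suc j] (mod M)"
    using cong_mult[OF Suc.IH cong_refl[of c]] by (simp only: power_Suc2 mult.assoc)
  finally show ?case .
qed

lemma coprime_zpow:
  fixes M c e :: int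
  assumes "M \<noteq> 0" "coprime c M"
  shows "coprime (zpow M c e) M"
  using assms by (simp add: zpow_def)

lemma DDLog_cong_mult_one_plus:
  fixes N g g' k :: int
  assumes "N > 1" and g: "coprime g N" and g': "[g' = g * (1 + k * N)] (mod N\<^sup>2)"
  shows "[DDLog N g' - DDLog N g = k] (mod N)"
proof -
  define u where "u = g mod N"
  define w where "w = modular_inverse N u"
  have "[g' = g * (1 + k * N)] (mod N)"
    using g' cong_modulus_mult[of g' _ N N] by (simp add: power2_eq_square)
  then have "[g' = g] (mod N)"
    by (rule cong_trans) (simp add: cong_iff_dvd_diff algebra_simps)
  then have low: "g' mod N = u"
    by (simp add: cong_def u_def)
  \<comment> \<open>\<open>g\<close> and \<open>g'\<close> share the low base-\<open>N\<close> digit \<open>u\<close>; their high digits differ by \<open>g k\<close> modulo \<open>N\<close>\<close>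
  have "N * (g' div N - g div N) = g' - g"
    using low minus_mod_eq_mult_div[of g' N] minus_mod_eq_mult_div[of g N]
    by (simp only: u_def right_diff_distrib)
  moreover have "N * N dvd (g' - g) - N * (g * k)"
    using g' by (simp add: cong_iff_dvd_diff power2_eq_square algebra_simps)
  ultimately have "N * N dvd N * (g' div N - g div N - g * k)"
    by (metis right_diff_distrib)
  then have high: "[g' div N = g div N + g * k] (mod N)"
    using \<open>N > 1\<close> by (simp add: cong_iff_dvd_diff diff_diff_eq)
  have "coprime u N"
    using g \<open>N > 1\<close> by (simp add: u_def)
  then have "[u * w = 1] (mod N)"
    unfolding w_def by (rule cong_modular_inverse1)
  moreover have "[g = u] (mod N)"
    by (simp add: u_def cong_def)
  ultimately have gkw: "[g * k * w = k] (mod N)"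
    by (metis cong_scalar_right cong_trans mult.commute mult.left_commute mult_1)
  have "DDLog N g' = g' div N * w mod N" and "DDLog N g = g div N * w mod N"
    by (simp_all add: DDLog_def w_def u_def low)
  then have "[DDLog N g' = DDLog N g + g * k * w] (mod N)"
    using cong_scalar_right[OF high, of w] by (simp add: cong_def distrib_right mod_add_left_eq)
  with gkw have "[DDLog N g' = DDLog N g + k] (mod N)"
    by (metis cong_add_lcancel cong_trans)
  then show ?thesis
    by (simp add: cong_iff_dvd_diff algebra_simps)
qed

lemma DDLog_zpow_shift:
  fixes N c e k :: int and K :: nat
  assumes "N > 1" "K > 0" and cK: "[c ^ K = 1 + k * N] (mod N\<^sup>2)"
  shows "[DDLog N (zpow (N\<^sup>2) c (e + int K)) - DDLog N (zpow (N\<^sup>2) c e) = k] (mod N)"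
proof -
  have "[c ^ K = 1 + k * N] (mod N)"
    using cK cong_modulus_mult[of _ _ N N] by (simp add: power2_eq_square)
  then have "[c ^ K = 1] (mod N)"
    by (rule cong_trans) (simp add: cong_iff_dvd_diff)
  then have "coprime (c ^ K) N"
    using cong_imp_coprime cong_sym coprime_1_left by blast
  then have c: "coprime c (N\<^sup>2)"
    using \<open>K > 0\<close> by simp
  define g where "g = zpow (N\<^sup>2) c e"
  have "coprime g N"
    using coprime_zpow[OF _ c, of e] \<open>N > 1\<close> by (simp add: g_def)
  have "[zpow (N\<^sup>2) c (e + int K) = g * c ^ K] (mod N\<^sup>2)"
    unfolding g_def by (rule zpow_plus_of_nat[OF c])
  also have "[g * c ^ K = g * (1 + k * N)] (mod N\<^sup>2)"
    using cK by (rule cong_scalar_left)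
  finally show ?thesis
    using DDLog_cong_mult_one_plus[OF \<open>N > 1\<close> \<open>coprime g N\<close>] by (simp add: g_def)
qed

lemma fastpai_primes_distinct:
  assumes "fastpai_primes \<kappa> n P Q p q"
  shows "P \<noteq> Q"
proof
  assume "P = Q"
  from assms have "prime P" "gcd (P - 1) (Q - 1) = 2" "p dvd P - 1" "prime p" "odd p"
    by (simp_all add: fastpai_primes_def)
  with \<open>P = Q\<close> prime_gt_1_int[of P] have "p dvd 2"
    by simp
  with \<open>prime p\<close> have "p = 2"
    using primes_dvd_imp_eq[of p 2] by simp
  with \<open>odd p\<close> show False by simp
qed

lemma fastpai_alpha_pos:
  assumes "fastpai_primes \<kappa> n P Q p q"
  shows "fastpai_alpha p q > 0"
  using assms prime_gt_0_int by (simp add: fastpai_primes_def fastpai_alpha_def)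

lemma fastpai_four_alpha_beta:
  assumes "fastpai_primes \<kappa> n P Q p q"
  shows "4 * fastpai_alpha p q * fastpai_beta P Q p q = (P - 1) * (Q - 1)"
proof -
  from assms have "odd p" "odd q" "p dvd P - 1" "q dvd Q - 1" "[P = 3] (mod 4)" "[Q = 3] (mod 4)"
    by (simp_all add: fastpai_primes_def)
  have "even (P - 1)"
    using \<open>[P = 3] (mod 4)\<close> unfolding cong_def by presburger
  with \<open>odd p\<close> \<open>p dvd P - 1\<close> have "2 * p dvd P - 1"
    by (simp add: divides_mult)
  have "even (Q - 1)"
    using \<open>[Q = 3] (mod 4)\<close> unfolding cong_def by presburger
  with \<open>odd q\<close> \<open>q dvd Q - 1\<close> have "2 * q dvd Q - 1"
    by (simp add: divides_mult)
  have "4 * p * q = (2 * p) * (2 * q)"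
    by simp
  with \<open>2 * p dvd P - 1\<close> \<open>2 * q dvd Q - 1\<close> have "4 * p * q dvd (P - 1) * (Q - 1)"
    by (simp only: mult_dvd_mono)
  then have "4 * p * q * ((P - 1) * (Q - 1) div (4 * p * q)) = (P - 1) * (Q - 1)"
    by (rule dvd_mult_div_cancel)
  then show ?thesis
    unfolding fastpai_alpha_def fastpai_beta_def by (simp only: mult.assoc)
qed

lemma fastpai_h_power_two_alpha:
  assumes keys: "fastpai_primes \<kappa> n P Q p q" and y0: "coprime y0 (P * Q)"
  shows "[fastpai_h (P * Q) (fastpai_beta P Q p q) y0 ^ nat (2 * fastpai_alpha p q) = 1] (mod P * Q)"
proof -
  define \<alpha> where "\<alpha> = fastpai_alpha p q"
  define \<beta> where "\<beta> = fastpai_beta P Q p q"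
  have "P \<noteq> Q"
    using keys by (rule fastpai_primes_distinct)
  have "prime P" "prime Q"
    using keys by (simp_all add: fastpai_primes_def)
  then have "P > 1" "Q > 1"
    using prime_gt_1_int by blast+
  then have "P * Q > 1" "(P - 1) * (Q - 1) > 0"
    by (simp_all add: less_1_mult)
  have "\<alpha> > 0" "4 * \<alpha> * \<beta> = (P - 1) * (Q - 1)"
    unfolding \<alpha>_def \<beta>_def using keys by (rule fastpai_alpha_pos, rule fastpai_four_alpha_beta)
  then have "\<beta> > 0"
    using \<open>(P - 1) * (Q - 1) > 0\<close> by (metis zero_less_mult_pos mult_pos_pos zero_less_numeral)
  have "int (nat (2 * \<beta>) * nat (2 * \<alpha>)) = int (totient (nat (P * Q)))"
    using \<open>\<alpha> > 0\<close> \<open>\<beta> > 0\<close> \<open>4 * \<alpha> * \<beta> = _\<close> totient_mult_primes_int[OF \<open>prime P\<close> \<open>prime Q\<close> \<open>P \<noteq> Q\<close>]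
    by (simp add: nat_mult_distrib[symmetric] algebra_simps)
  then have exponent: "nat (2 * \<beta>) * nat (2 * \<alpha>) = totient (nat (P * Q))"
    by (simp only: of_nat_eq_iff)
  have "[fastpai_h (P * Q) \<beta> y0 = - (y0 ^ nat (2 * \<beta>))] (mod P * Q)"
    by (simp add: fastpai_h_def cong_def)
  then have "[fastpai_h (P * Q) \<beta> y0 ^ nat (2 * \<alpha>) = (- (y0 ^ nat (2 * \<beta>))) ^ nat (2 * \<alpha>)] (mod P * Q)"
    by (rule cong_pow)
  also have "(- (y0 ^ nat (2 * \<beta>))) ^ nat (2 * \<alpha>) = y0 ^ totient (nat (P * Q))"
    using \<open>\<alpha> > 0\<close> by (simp add: exponent[symmetric] power_mult even_nat_iff)
  also have "[y0 ^ totient (nat (P * Q)) = 1] (mod P * Q)"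
    using y0 \<open>P * Q > 1\<close> by (simp add: residues.euler_theorem residues_def)
  finally show ?thesis
    unfolding \<alpha>_def \<beta>_def .
qed

lemma fastpai_enc_power:
  fixes N h m :: int and K r :: nat
  assumes hK: "[h ^ K = 1] (mod N)" and "m \<ge> 0"
  shows "[fastpai_enc N h m r ^ K = 1 + int K * m * N] (mod N\<^sup>2)"
proof -
  define s where "s = h ^ r mod N"
  have "[s ^ K = (h ^ K) ^ r] (mod N)"
    unfolding s_def by (metis cong_mod_left cong_pow cong_refl mult.commute power_mult)
  also have "[(h ^ K) ^ r = 1] (mod N)"
    using cong_pow[OF hK] by simp
  finally have s: "[(s ^ nat N) ^ K = 1] (mod N\<^sup>2)"
    by (metis cong_power_modulus_square mult.commute power_mult)
  have "int (nat m * K) * N = int K * m * N"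
    using \<open>m \<ge> 0\<close> by simp
  then have one_plus: "[((1 + N) ^ nat m) ^ K = 1 + int K * m * N] (mod N\<^sup>2)"
    using one_plus_modulus_power[of N "nat m * K"] by (simp only: power_mult)
  have "[fastpai_enc N h m r ^ K = ((1 + N) ^ nat m * s ^ nat N) ^ K] (mod N\<^sup>2)"
    unfolding fastpai_enc_def s_def by (rule cong_pow) (simp add: cong_def)
  also have "[((1 + N) ^ nat m * s ^ nat N) ^ K = (1 + int K * m * N) * 1] (mod N\<^sup>2)"
    unfolding power_mult_distrib using one_plus s by (rule cong_mult)
  finally show ?thesis
    by simp
qed

theorem theorem4:
  fixes \<kappa> n :: nat and P Q p q N y0 \<mu> a0 a1 :: int and r :: nat
  assumes keys: "fastpai_primes \<kappa> n P Q p q"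
    and N_def: "N = P * Q"
    and y0: "y0 \<in> {0..<N}" "coprime y0 N"
    and r: "r < 2 ^ lpar \<kappa>"
    and mu: "\<mu> \<in> {0..<N}"
    and shares: "a1 - a0 = 2 * fastpai_alpha p q"
  shows "let h = fastpai_h N (fastpai_beta P Q p q) y0;
             c = fastpai_enc N h \<mu> r;
             d0 = DDLog N (zpow (N ^ 2) c a0);
             d1 = DDLog N (zpow (N ^ 2) c a1)
         in [d1 - d0 = 2 * fastpai_alpha p q * \<mu>] (mod N)"
proof -
  define K where "K = nat (2 * fastpai_alpha p q)"
  define h where "h = fastpai_h N (fastpai_beta P Q p q) y0"
  define c where "c = fastpai_enc N h \<mu> r"
  have "K > 0" and a1: "a1 = a0 + int K"
    using fastpai_alpha_pos[OF keys] shares by (simp_all add: K_def)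
  have "N > 1"
    using keys prime_gt_1_int by (simp add: N_def fastpai_primes_def less_1_mult)
  have "[h ^ K = 1] (mod N)"
    using fastpai_h_power_two_alpha[OF keys] y0(2) by (simp add: h_def K_def N_def)
  then have "[c ^ K = 1 + (2 * fastpai_alpha p q * \<mu>) * N] (mod N\<^sup>2)"
    using fastpai_enc_power[of h K N \<mu> r] mu fastpai_alpha_pos[OF keys]
    by (simp add: c_def K_def)
  from DDLog_zpow_shift[OF \<open>N > 1\<close> \<open>K > 0\<close> this, of a0]
  show ?thesis
    by (simp add: Let_def a1 c_def h_def)
qed

end
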